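(* There is a universal constant $K>0$ such that the following holds. Let $\rho_1,\dots,\rho_T$ be $d$-dimensional quantum states, $\varrho=\rho_1\otimes\cdots\otimes\rho_T$, $\rho_{\mathrm{avg}}=\frac1T\sum_t\rho_t$, and $\mu=\mathrm{Tr}[(\rho_{\mathrm{avg}}-\frac Id)^2]$. Let $A=\frac1{T^2}\sum_{1\le i\ne j\le T}S_{ij}-\frac Id$, where $S_{ij}$ is the swap operator on the $i$th and $j$th tensor components of $(\mathbb C^d)^{\otimes T}$ and $\frac Id$ denotes $\frac1d$ times the identity on $(\mathbb C^d)^{\otimes T}$. Then $$\big|\mathbb E_\varrho[A]-\mu\big|\le\frac1T,\qquad \mathrm{Var}_\varrho[A]\le K\Big(\frac\mu T+\frac1{T^2}\Big).$$
   Context: $\mathbb E_\varrho[Y]=\mathrm{Tr}[\varrho Y]$ and $\mathrm{Var}_\varrho[Y]=\mathbb E_\varrho[Y^2]-\mathbb E_\varrho[Y]^2$. *)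

theory Defs
  imports Complex_Main
begin

text \<open>Operators on C^n are represented as matrices (functions nat => nat => complex)
  with respect to the standard basis, indices ranging over 0..<n.
  Operators on the T-fold tensor power (C^d)^{\<otimes>T} are represented as matrices
  indexed by computational basis states, i.e. lists xs of length T with entries < d.\<close>

definition density :: "nat \<Rightarrow> (nat \<Rightarrow> nat \<Rightarrow> complex) \<Rightarrow> bool" where
  "density d \<rho> \<longleftrightarrow>
     (\<forall>v :: nat \<Rightarrow> complex.
        (\<Sum>i<d. \<Sum>j<d. cnj (v i) * \<rho> i j * v j) \<in> \<real> \<and>
        0 \<le> Re (\<Sum>i<d. \<Sum>j<d. cnj (v i) * \<rho> i j * v j)) \<and>
     (\<Sum>i<d. \<rho> i i) = 1"

definition basis :: "nat \<Rightarrow> nat \<Rightarrow> nat list set" where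
  "basis d T = {xs. length xs = T \<and> set xs \<subseteq> {..<d}}"

definition prod_state :: "nat \<Rightarrow> (nat \<Rightarrow> nat \<Rightarrow> nat \<Rightarrow> complex) \<Rightarrow> nat list \<Rightarrow> nat list \<Rightarrow> complex" where
  "prod_state T \<rho> xs ys = (\<Prod>t<T. \<rho> t (xs ! t) (ys ! t))"

definition swap_op :: "nat \<Rightarrow> nat \<Rightarrow> nat list \<Rightarrow> nat list \<Rightarrow> complex" where
  "swap_op i j xs ys = (if xs = ys[i := ys ! j, j := ys ! i] then 1 else 0)"

definition id_op :: "nat list \<Rightarrow> nat list \<Rightarrow> complex" where
  "id_op xs ys = (if xs = ys then 1 else 0)"

definition mat_mult :: "'i set \<Rightarrow> ('i \<Rightarrow> 'i \<Rightarrow> complex) \<Rightarrow> ('i \<Rightarrow> 'i \<Rightarrow> complex) \<Rightarrow> 'i \<Rightarrow> 'i \<Rightarrow> complex" where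
  "mat_mult I X Y a b = (\<Sum>c\<in>I. X a c * Y c b)"

definition mat_trace :: "'i set \<Rightarrow> ('i \<Rightarrow> 'i \<Rightarrow> complex) \<Rightarrow> complex" where
  "mat_trace I X = (\<Sum>a\<in>I. X a a)"

definition expect :: "'i set \<Rightarrow> ('i \<Rightarrow> 'i \<Rightarrow> complex) \<Rightarrow> ('i \<Rightarrow> 'i \<Rightarrow> complex) \<Rightarrow> complex" where
  "expect I \<rho> Y = mat_trace I (mat_mult I \<rho> Y)"

definition variance :: "'i set \<Rightarrow> ('i \<Rightarrow> 'i \<Rightarrow> complex) \<Rightarrow> ('i \<Rightarrow> 'i \<Rightarrow> complex) \<Rightarrow> complex" where
  "variance I \<rho> Y = expect I \<rho> (mat_mult I Y Y) - (expect I \<rho> Y)^2"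

definition rho_avg :: "nat \<Rightarrow> (nat \<Rightarrow> nat \<Rightarrow> nat \<Rightarrow> complex) \<Rightarrow> nat \<Rightarrow> nat \<Rightarrow> complex" where
  "rho_avg T \<rho> a b = (\<Sum>t<T. \<rho> t a b) / of_nat T"

definition mu :: "nat \<Rightarrow> nat \<Rightarrow> (nat \<Rightarrow> nat \<Rightarrow> nat \<Rightarrow> complex) \<Rightarrow> complex" where
  "mu d T \<rho> = (let M = (\<lambda>a b. rho_avg T \<rho> a b - (if a = b then 1 / of_nat d else 0))
               in mat_trace {..<d} (mat_mult {..<d} M M))"

definition A_op :: "nat \<Rightarrow> nat \<Rightarrow> nat list \<Rightarrow> nat list \<Rightarrow> complex" where
  "A_op d T xs ys =
     (\<Sum>i<T. \<Sum>j\<in>{..<T} - {i}. swap_op i j xs ys) / (of_nat T)^2 - id_op xs ys / of_nat d"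

end

theory Submission
  imports Defs "HOL-Library.FuncSet" "HOL-Combinatorics.Transposition" "HOL-Analysis.Convex"
begin

text \<open>Write \<open>A = U/T\<^sup>2 - I/d\<close> with \<open>U = \<Sum>\<^sub>i\<^sub>\<noteq>\<^sub>j S\<^sub>i\<^sub>j\<close>. In a product state the
  expectation of a permutation of the tensor factors is the product, over its cycles, of the traces
  of the products of the states along the cycle. Hence \<open>E[S\<^sub>i\<^sub>j] = Tr[\<rho>\<^sub>i \<rho>\<^sub>j]\<close>, and
  \<open>E[A] - \<mu> = -T\<^sup>-\<^sup>2 \<Sum>\<^sub>i Tr \<rho>\<^sub>i\<^sup>2\<close>, which has modulus at most \<open>1/T\<close>.

  For the variance, \<open>S\<^sub>i\<^sub>j\<close> and \<open>S\<^sub>k\<^sub>l\<close> are uncorrelated when the pairs are disjoint, and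
  the \<open>O(T\<^sup>2)\<close> terms with \<open>{i, j} = {k, l}\<close> are bounded. Pairs sharing exactly one index give
  \<open>Tr[\<rho>\<^sub>a\<rho>\<^sub>b\<rho>\<^sub>c] - Tr[\<rho>\<^sub>a\<rho>\<^sub>b] Tr[\<rho>\<^sub>a\<rho>\<^sub>c]\<close>; up to \<open>O(T\<^sup>2)\<close> terms with
  repeated indices, summing this over all \<open>a, b, c\<close> gives
  \<open>T\<^sup>3 Tr R\<^sup>3 - T\<^sup>2 \<Sum>\<^sub>a Tr[\<rho>\<^sub>a R]\<^sup>2\<close> with \<open>R = \<rho>\<^sub>a\<^sub>v\<^sub>g\<close>, at most
  \<open>T\<^sup>3 (Tr R\<^sup>3 - (Tr R\<^sup>2)\<^sup>2)\<close> by Cauchy-Schwarz. Finally \<open>0 \<le> R \<le> I\<close> gives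
  \<open>Tr[H R H] \<le> Tr H\<^sup>2 = \<mu>\<close> for \<open>H = R - I/d\<close>, i.e. \<open>Tr R\<^sup>3 - (Tr R\<^sup>2)\<^sup>2 \<le> \<mu>\<close>.
  Altogether \<open>Var[U] \<le> 4 T\<^sup>3 \<mu> + 28 T\<^sup>2\<close>, so \<open>K = 28\<close> works.\<close>

section \<open>Traces and density matrices on \<open>\<complex>\<^sup>d\<close>\<close>

abbreviation trace_prod :: "nat \<Rightarrow> (nat \<Rightarrow> nat \<Rightarrow> complex) \<Rightarrow> (nat \<Rightarrow> nat \<Rightarrow> complex) \<Rightarrow> complex"
  where "trace_prod d X Y \<equiv> mat_trace {..<d} (mat_mult {..<d} X Y)"

definition trace_prod3 ::
    "nat \<Rightarrow> (nat \<Rightarrow> nat \<Rightarrow> complex) \<Rightarrow> (nat \<Rightarrow> nat \<Rightarrow> complex) \<Rightarrow> (nat \<Rightarrow> nat \<Rightarrow> complex) \<Rightarrow> complex"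
  where "trace_prod3 d X Y Z = (\<Sum>a<d. \<Sum>b<d. \<Sum>c<d. X a b * Y b c * Z c a)"

definition quad_form :: "nat \<Rightarrow> (nat \<Rightarrow> nat \<Rightarrow> complex) \<Rightarrow> (nat \<Rightarrow> complex) \<Rightarrow> complex"
  where "quad_form d X v = (\<Sum>i<d. \<Sum>j<d. cnj (v i) * X i j * v j)"

definition hermitian :: "nat \<Rightarrow> (nat \<Rightarrow> nat \<Rightarrow> complex) \<Rightarrow> bool"
  where "hermitian d X \<longleftrightarrow> (\<forall>a<d. \<forall>b<d. X b a = cnj (X a b))"

lemma density_quad_form:
  assumes "density d \<rho>"
  shows density_quad_form_real: "quad_form d \<rho> v \<in> \<real>"
    and density_quad_form_nonneg: "0 \<le> Re (quad_form d \<rho> v)"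
  using assms unfolding density_def quad_form_def by blast+

lemma density_trace: "density d \<rho> \<Longrightarrow> (\<Sum>a<d. \<rho> a a) = 1"
  unfolding density_def by blast

lemma quad_form_supported:
  assumes "S \<subseteq> {..<d}" "\<And>i. i \<notin> S \<Longrightarrow> v i = 0"
  shows "quad_form d X v = (\<Sum>i\<in>S. \<Sum>j\<in>S. cnj (v i) * X i j * v j)"
  unfolding quad_form_def using assms
  by (intro sum.mono_neutral_cong_right) (auto intro!: sum.mono_neutral_cong_right)

lemma quad_form_single:
  "a < d \<Longrightarrow> quad_form d X (\<lambda>i. if i = a then x else 0) = cnj x * X a a * x"
  by (subst quad_form_supported[where S = "{a}"]) auto

lemma quad_form_pair:
  assumes "a < d" "b < d" "a \<noteq> b"
  shows "quad_form d X (\<lambda>i. if i = a then x else if i = b then y else 0) =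
    cnj x * X a a * x + cnj x * X a b * y + cnj y * X b a * x + cnj y * X b b * y"
  using assms by (subst quad_form_supported[where S = "{a, b}"]) auto

lemma density_diag:
  assumes "density d \<rho>" "a < d"
  shows density_diag_real: "\<rho> a a \<in> \<real>"
    and density_diag_nonneg: "0 \<le> Re (\<rho> a a)"
  using density_quad_form[OF assms(1), of "\<lambda>i. if i = a then 1 else 0"]
  by (simp_all add: quad_form_single[OF assms(2)])

text \<open>Positivity on the vectors \<open>e\<^sub>a + e\<^sub>b\<close> and \<open>e\<^sub>a + \<i> e\<^sub>b\<close> forces the two
  off-diagonal entries to be conjugate.\<close>
lemma density_hermitian:
  assumes "density d \<rho>"
  shows "hermitian d \<rho>"
  unfolding hermitian_def
proof (intro allI impI)
  fix a b assume ab: "a < d" "b < d"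
  show "\<rho> b a = cnj (\<rho> a b)"
  proof (cases "a = b")
    case True
    then show ?thesis using density_diag_real[OF assms ab(1)] by (simp add: Reals_cnj_iff)
  next
    case False
    have diag: "Im (\<rho> a a) = 0" "Im (\<rho> b b) = 0"
      using density_diag_real[OF assms] ab by (simp_all add: complex_is_Real_iff)
    have "Im (\<rho> a a + \<rho> a b + \<rho> b a + \<rho> b b) = 0"
      using density_quad_form_real[OF assms, of "\<lambda>i. if i = a then 1 else if i = b then 1 else 0"]
      by (simp add: quad_form_pair[OF ab False] complex_is_Real_iff)
    moreover have "Im (\<rho> a a + \<rho> a b * \<i> - \<i> * \<rho> b a + \<rho> b b) = 0"
      using density_quad_form_real[OF assms, of "\<lambda>i. if i = a then 1 else if i = b then \<i> else 0"]
      by (simp add: quad_form_pair[OF ab False] complex_is_Real_iff)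
    ultimately show ?thesis using diag by (simp add: complex_eq_iff)
  qed
qed

lemma hermitian_cnj:
  assumes "hermitian d X" "a < d" "b < d"
  shows "cnj (X a b) = X b a"
proof -
  have "X b a = cnj (X a b)" using assms unfolding hermitian_def by blast
  then show ?thesis by (rule sym)
qed

lemma quadratic_nonneg_imp_le:
  fixes A B r :: real
  assumes "0 \<le> A" "0 \<le> B" "0 \<le> r" and nonneg: "\<And>t. 0 \<le> A * t\<^sup>2 - 2 * t * r + B * r"
  shows "r \<le> A * B"
proof (cases "A = 0")
  case True
  have "0 \<le> A * (B + 1)\<^sup>2 - 2 * (B + 1) * r + B * r" by (rule nonneg)
  then have "2 * r + B * r \<le> 0" using True by (simp add: algebra_simps)
  then have "r \<le> 0" using mult_nonneg_nonneg[OF assms(2,3)] by linarith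
  then show ?thesis using True by simp
next
  case False
  then have "A > 0" using assms(1) by simp
  have "0 \<le> A * (r / A)\<^sup>2 - 2 * (r / A) * r + B * r" by (rule nonneg)
  also have "\<dots> = r * (A * B - r) / A" using \<open>A > 0\<close> by (simp add: field_simps power2_eq_square)
  finally show ?thesis using \<open>A > 0\<close> assms(2,3)
    by (cases "r = 0") (auto simp: zero_le_divide_iff zero_le_mult_iff)
qed

lemma density_entry_sq_le:
  assumes "density d \<rho>" "a < d" "b < d"
  shows "(cmod (\<rho> a b))\<^sup>2 \<le> Re (\<rho> a a) * Re (\<rho> b b)"
proof (cases "a = b")
  case True
  have "cmod (\<rho> a a) = \<bar>Re (\<rho> a a)\<bar>"
    using density_diag_real[OF assms(1,2)] by (simp add: cmod_eq_Re complex_is_Real_iff)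
  then show ?thesis using True by (simp add: power2_eq_square)
next
  case False
  define A B z where "A = Re (\<rho> a a)" and "B = Re (\<rho> b b)" and "z = \<rho> a b"
  have diag: "\<rho> a a = of_real A" "\<rho> b b = of_real B"
    unfolding A_def B_def using density_diag_real[OF assms(1)] assms(2,3) by simp_all
  have z: "\<rho> b a = cnj z"
    unfolding z_def using hermitian_cnj[OF density_hermitian[OF assms(1)] assms(2,3)] by simp
  have "0 \<le> A * t\<^sup>2 - 2 * t * (cmod z)\<^sup>2 + B * (cmod z)\<^sup>2" for t
  proof -
    have "0 \<le> Re (quad_form d \<rho> (\<lambda>i. if i = a then of_real t else if i = b then - cnj z else 0))"
      by (rule density_quad_form_nonneg[OF assms(1)])
    also have "\<dots> = Re (of_real t * of_real A * of_real t + of_real t * z * (- cnj z)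
        + (- z) * cnj z * of_real t + (- z) * of_real B * (- cnj z))"
      unfolding quad_form_pair[OF assms(2,3) False] diag z z_def by simp
    also have "\<dots> = A * t\<^sup>2 - 2 * t * (cmod z)\<^sup>2 + B * (cmod z)\<^sup>2"
      by (simp add: cmod_def power2_eq_square algebra_simps)
    finally show ?thesis .
  qed
  then show ?thesis unfolding A_def B_def z_def
    by (rule quadratic_nonneg_imp_le[OF density_diag_nonneg[OF assms(1,2)]
          density_diag_nonneg[OF assms(1,3)] zero_le_power2])
qed

lemma density_entry_le:
  assumes "density d \<rho>" "a < d" "b < d"
  shows "cmod (\<rho> a b) \<le> sqrt (Re (\<rho> a a)) * sqrt (Re (\<rho> b b))"
  using real_sqrt_le_mono[OF density_entry_sq_le[OF assms]] by (simp add: real_sqrt_mult)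

lemma density_sum_sqrt_diag_le:
  assumes "density d X" "density d Y"
  shows "(\<Sum>a<d. sqrt (Re (X a a)) * sqrt (Re (Y a a))) \<le> 1"
proof -
  have "(\<Sum>a<d. sqrt (Re (X a a)) * sqrt (Re (Y a a))) \<le> (\<Sum>a<d. (Re (X a a) + Re (Y a a)) / 2)"
  proof (rule sum_mono)
    fix a assume "a \<in> {..<d}"
    then show "sqrt (Re (X a a)) * sqrt (Re (Y a a)) \<le> (Re (X a a) + Re (Y a a)) / 2"
      using arith_geo_mean_sqrt[OF density_diag_nonneg[OF assms(1)] density_diag_nonneg[OF assms(2)]]
      by (simp add: real_sqrt_mult)
  qed
  also have "\<dots> = 1"
    using arg_cong[OF density_trace[OF assms(1)], of Re] arg_cong[OF density_trace[OF assms(2)], of Re]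
    by (simp add: sum.distrib sum_divide_distrib[symmetric])
  finally show ?thesis .
qed

lemma sum_rotate3:
  "(\<Sum>a\<in>A. \<Sum>b\<in>B. \<Sum>c\<in>C. f a b c) = (\<Sum>b\<in>B. \<Sum>c\<in>C. \<Sum>a\<in>A. f a b c)"
  by (subst sum.swap) (rule sum.cong[OF refl], rule sum.swap)

lemma trace_prod_eq: "trace_prod d X Y = (\<Sum>a<d. \<Sum>c<d. X a c * Y c a)"
  by (simp add: mat_trace_def mat_mult_def)

lemma trace_prod_commute: "trace_prod d X Y = trace_prod d Y X"
  unfolding trace_prod_eq by (subst sum.swap) (simp add: mult.commute)

lemma trace_prod3_rotate: "trace_prod3 d X Y Z = trace_prod3 d Y Z X"
  unfolding trace_prod3_def by (subst sum_rotate3) (simp add: mult_ac)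

lemma trace_prod_sum_right:
  "(\<Sum>k\<in>K. trace_prod d X (Y k)) = trace_prod d X (\<lambda>a b. \<Sum>k\<in>K. Y k a b)"
  unfolding trace_prod_eq sum_distrib_left by (rule sum_rotate3)

lemma trace_prod3_sum_left:
  "(\<Sum>k\<in>K. trace_prod3 d (X k) Y Z) = trace_prod3 d (\<lambda>a b. \<Sum>k\<in>K. X k a b) Y Z"
  unfolding trace_prod3_def sum_distrib_right
  by (subst sum.swap) (rule sum.cong[OF refl], rule sum_rotate3)

lemma trace_prod_scale_right: "trace_prod d X (\<lambda>a b. c * Y a b) = c * trace_prod d X Y"
  unfolding trace_prod_eq by (simp add: sum_distrib_left mult_ac)

lemma trace_prod3_scale:
  "trace_prod3 d (\<lambda>a b. c * X a b) Y Z = c * trace_prod3 d X Y Z"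
  unfolding trace_prod3_def by (simp add: sum_distrib_left mult_ac)

lemma trace_prod_real:
  assumes "hermitian d X" "hermitian d Y"
  shows "trace_prod d X Y \<in> \<real>"
proof -
  have "cnj (trace_prod d X Y) = trace_prod d Y X"
    unfolding trace_prod_eq cnj_sum
    by (intro sum.cong refl) (simp add: hermitian_cnj[OF assms(1)] hermitian_cnj[OF assms(2)] mult.commute)
  then show ?thesis by (simp add: Reals_cnj_iff trace_prod_commute)
qed

lemma trace_prod_self_eq_sum_cmod:
  assumes "hermitian d H"
  shows "Re (trace_prod d H H) = (\<Sum>a<d. \<Sum>c<d. (cmod (H c a))\<^sup>2)"
  unfolding trace_prod_eq Re_sum
proof (intro sum.cong refl)
  fix a c assume "a \<in> {..<d}" "c \<in> {..<d}"
  then have "H a c = cnj (H c a)" using hermitian_cnj[OF assms] by simp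
  then show "Re (H a c * H c a) = (cmod (H c a))\<^sup>2" by (simp add: cmod_def power2_eq_square)
qed

lemma trace_prod_density_le:
  assumes "density d X" "density d Y"
  shows "cmod (trace_prod d X Y) \<le> 1"
proof -
  let ?s = "\<lambda>Z a. sqrt (Re (Z a a))"
  have s: "0 \<le> ?s X a" "0 \<le> ?s Y a" if "a < d" for a
    using that assms by (simp_all add: density_diag_nonneg)
  have "cmod (trace_prod d X Y) \<le> (\<Sum>a<d. \<Sum>c<d. cmod (X a c) * cmod (Y c a))"
    unfolding trace_prod_eq norm_mult[symmetric]
    by (rule order.trans[OF norm_sum sum_mono]) (rule norm_sum)
  also have "\<dots> \<le> (\<Sum>a<d. \<Sum>c<d. (?s X a * ?s Y a) * (?s X c * ?s Y c))"
    using assms s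
    by (intro sum_mono order.trans[OF mult_mono[OF density_entry_le density_entry_le]]) (auto simp: mult_ac)
  also have "\<dots> = (\<Sum>a<d. ?s X a * ?s Y a) * (\<Sum>c<d. ?s X c * ?s Y c)"
    by (simp add: sum_product)
  also have "\<dots> \<le> 1 * 1"
    using density_sum_sqrt_diag_le[OF assms] s by (intro mult_mono) (auto intro!: sum_nonneg)
  finally show ?thesis by simp
qed

lemma trace_prod3_density_le:
  assumes "density d X" "density d Y" "density d Z"
  shows "cmod (trace_prod3 d X Y Z) \<le> 1"
proof -
  let ?s = "\<lambda>W a. sqrt (Re (W a a))"
  have s: "0 \<le> ?s X a" "0 \<le> ?s Y a" "0 \<le> ?s Z a" if "a < d" for a
    using that assms by (simp_all add: density_diag_nonneg)
  have "cmod (trace_prod3 d X Y Z) \<le> (\<Sum>a<d. \<Sum>b<d. \<Sum>c<d. cmod (X a b) * cmod (Y b c) * cmod (Z c a))"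
    unfolding trace_prod3_def norm_mult[symmetric]
    by (rule order.trans[OF norm_sum sum_mono], rule order.trans[OF norm_sum sum_mono]) (rule norm_sum)
  also have "\<dots> \<le> (\<Sum>a<d. \<Sum>b<d. \<Sum>c<d. (?s X a * ?s Z a) * ((?s X b * ?s Y b) * (?s Y c * ?s Z c)))"
  proof (intro sum_mono)
    fix a b c assume "a \<in> {..<d}" "b \<in> {..<d}" "c \<in> {..<d}"
    then have "cmod (X a b) * cmod (Y b c) * cmod (Z c a)
        \<le> (?s X a * ?s X b) * (?s Y b * ?s Y c) * (?s Z c * ?s Z a)"
      using assms s by (intro mult_mono density_entry_le) auto
    then show "cmod (X a b) * cmod (Y b c) * cmod (Z c a)
        \<le> (?s X a * ?s Z a) * ((?s X b * ?s Y b) * (?s Y c * ?s Z c))"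
      by (simp add: mult_ac)
  qed
  also have "\<dots> = (\<Sum>a<d. ?s X a * ?s Z a) * ((\<Sum>b<d. ?s X b * ?s Y b) * (\<Sum>c<d. ?s Y c * ?s Z c))"
    by (simp only: sum_distrib_right, simp only: sum_distrib_left)
  also have "\<dots> \<le> 1 * (1 * 1)"
    using density_sum_sqrt_diag_le[OF assms(1,3)] density_sum_sqrt_diag_le[OF assms(1,2)]
      density_sum_sqrt_diag_le[OF assms(2,3)] s
    by (intro mult_mono) (auto intro!: sum_nonneg mult_nonneg_nonneg)
  finally show ?thesis by simp
qed

lemma density_quad_form_le:
  assumes "density d R"
  shows "Re (quad_form d R v) \<le> (\<Sum>a<d. (cmod (v a))\<^sup>2)"
proof -
  let ?s = "\<lambda>a. sqrt (Re (R a a))"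
  have "Re (quad_form d R v) \<le> (\<Sum>i<d. \<Sum>j<d. cmod (v i) * cmod (R i j) * cmod (v j))"
    unfolding quad_form_def
    by (rule order.trans[OF complex_Re_le_cmod], rule order.trans[OF norm_sum sum_mono],
        rule order.trans[OF norm_sum sum_mono]) (simp add: norm_mult)
  also have "\<dots> \<le> (\<Sum>i<d. \<Sum>j<d. (cmod (v i) * ?s i) * (cmod (v j) * ?s j))"
  proof (intro sum_mono)
    fix i j assume "i \<in> {..<d}" "j \<in> {..<d}"
    then have "cmod (v i) * cmod (R i j) * cmod (v j) \<le> cmod (v i) * (?s i * ?s j) * cmod (v j)"
      using assms by (intro mult_mono density_entry_le) (auto simp: density_diag_nonneg)
    then show "cmod (v i) * cmod (R i j) * cmod (v j) \<le> (cmod (v i) * ?s i) * (cmod (v j) * ?s j)"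
      by (simp add: mult_ac)
  qed
  also have "\<dots> = (\<Sum>i<d. cmod (v i) * ?s i)\<^sup>2"
    by (simp add: power2_eq_square sum_product)
  also have "\<dots> \<le> (\<Sum>i<d. (cmod (v i))\<^sup>2) * (\<Sum>i<d. (?s i)\<^sup>2)"
    by (rule Cauchy_Schwarz_ineq_sum)
  also have "(\<Sum>i<d. (?s i)\<^sup>2) = 1"
    using arg_cong[OF density_trace[OF assms], of Re] by (simp add: density_diag_nonneg[OF assms])
  finally show ?thesis by simp
qed

lemma mult_if_zero:
  fixes x y :: "'a::mult_zero"
  shows "x * (if P then y else 0) = (if P then x * y else 0)"
    and "(if P then y else 0) * x = (if P then y * x else 0)"
  by simp_all

lemma sum_if_zero: "(\<Sum>x\<in>A. if P then f x else 0) = (if P then sum f A else 0)"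
  by simp

lemma trace_prod_shift:
  "trace_prod d (\<lambda>a b. X a b - (if a = b then c else 0)) (\<lambda>a b. Y a b - (if a = b then c else 0))
   = trace_prod d X Y - c * (\<Sum>a<d. X a a) - c * (\<Sum>a<d. Y a a) + c\<^sup>2 * of_nat d"
  unfolding trace_prod_eq
  by (simp add: algebra_simps sum.distrib sum_subtractf mult_if_zero sum_distrib_left power2_eq_square)

lemma trace_prod3_shift:
  "trace_prod3 d (\<lambda>a b. X a b - (if a = b then c else 0)) Y (\<lambda>a b. Z a b - (if a = b then c else 0))
   = trace_prod3 d X Y Z - c * trace_prod d X Y - c * trace_prod d Y Z + c\<^sup>2 * (\<Sum>a<d. Y a a)"
  unfolding trace_prod_eq trace_prod3_def
  by (simp add: algebra_simps sum.distrib sum_subtractf mult_if_zero sum_if_zero sum_distrib_left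
      power2_eq_square)

lemma hermitian_shift:
  assumes "hermitian d X" "cnj c = c"
  shows "hermitian d (\<lambda>a b. X a b - (if a = b then c else 0))"
  unfolding hermitian_def
proof (intro allI impI)
  fix a b assume "a < d" "b < d"
  then show "X b a - (if b = a then c else 0) = cnj (X a b - (if a = b then c else 0))"
    using hermitian_cnj[OF assms(1)] assms(2) by auto
qed

text \<open>With \<open>H = R - I/d\<close>, the bound \<open>R \<le> I\<close> gives \<open>Tr[H R H] \<le> Tr[H\<^sup>2]\<close>; expanding both
  sides in powers of \<open>R\<close> yields the inequality.\<close>
lemma density_trace_prod3_le:
  assumes R: "density d R" and d: "d \<ge> 1"
  shows "Re (trace_prod3 d R R R) - (Re (trace_prod d R R))\<^sup>2 \<le> Re (trace_prod d R R) - 1 / real d"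
proof -
  define H where "H = (\<lambda>a b. R a b - (if a = b then 1 / of_nat d else 0))"
  have hH: "hermitian d H"
    unfolding H_def by (rule hermitian_shift[OF density_hermitian[OF R]]) simp
  have trR: "(\<Sum>a<d. R a a) = 1" by (rule density_trace[OF R])
  have "Re (trace_prod3 d H R H) = (\<Sum>x<d. Re (quad_form d R (\<lambda>y. H y x)))"
    unfolding trace_prod3_def quad_form_def Re_sum[symmetric]
    by (intro arg_cong[where f = Re] sum.cong refl) (simp add: hermitian_cnj[OF hH])
  also have "\<dots> \<le> (\<Sum>x<d. \<Sum>y<d. (cmod (H y x))\<^sup>2)"
    by (intro sum_mono density_quad_form_le[OF R])
  also have "\<dots> = Re (trace_prod d H H)"
    by (rule trace_prod_self_eq_sum_cmod[OF hH, symmetric])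
  finally have HRH: "Re (trace_prod3 d H R H) \<le> Re (trace_prod d H H)" .
  have "trace_prod d H H = trace_prod d R R - 1 / of_nat d"
    unfolding H_def trace_prod_shift trR using d by (simp add: power2_eq_square)
  moreover have "trace_prod3 d H R H
      = trace_prod3 d R R R - 2 / of_nat d * trace_prod d R R + 1 / (of_nat d)\<^sup>2"
    unfolding H_def trace_prod3_shift trR by (simp add: power2_eq_square)
  ultimately have "Re (trace_prod3 d R R R) - 2 / real d * Re (trace_prod d R R) + 1 / (real d)\<^sup>2
      \<le> Re (trace_prod d R R) - 1 / real d"
    using HRH by (simp add: power2_eq_square)
  moreover have "0 \<le> (Re (trace_prod d R R) - 1 / real d)\<^sup>2" by simp
  ultimately show ?thesis by (simp add: power2_eq_square algebra_simps)
qed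

lemma quad_form_rho_avg: "quad_form d (rho_avg T \<rho>) v = (\<Sum>t<T. quad_form d (\<rho> t) v) / of_nat T"
  unfolding quad_form_def rho_avg_def
  by (simp add: sum_divide_distrib sum_distrib_left sum_distrib_right sum_rotate3[where A = "{..<T}"])

lemma density_rho_avg:
  assumes T: "T \<ge> 1" and dens: "\<forall>t<T. density d (\<rho> t)"
  shows "density d (rho_avg T \<rho>)"
  unfolding density_def
proof (intro conjI allI)
  fix v
  have "(\<Sum>t<T. quad_form d (\<rho> t) v) \<in> \<real>" "0 \<le> Re (\<Sum>t<T. quad_form d (\<rho> t) v)"
    using dens by (auto intro!: sum_nonneg simp: density_quad_form_real density_quad_form_nonneg)
  then show "(\<Sum>i<d. \<Sum>j<d. cnj (v i) * rho_avg T \<rho> i j * v j) \<in> \<real>"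
    "0 \<le> Re (\<Sum>i<d. \<Sum>j<d. cnj (v i) * rho_avg T \<rho> i j * v j)"
    using quad_form_rho_avg[of d T \<rho> v] unfolding quad_form_def
    by (auto simp: Reals_divide divide_nonneg_pos)
next
  have "(\<Sum>i<d. rho_avg T \<rho> i i) = (\<Sum>t<T. \<Sum>i<d. \<rho> t i i) / of_nat T"
    unfolding rho_avg_def by (simp add: sum_divide_distrib[symmetric] sum.swap[of _ "{..<d}"])
  also have "\<dots> = 1" using dens T by (simp add: density_trace)
  finally show "(\<Sum>i<d. rho_avg T \<rho> i i) = 1" .
qed

lemma sum_states_eq_rho_avg:
  "T \<ge> 1 \<Longrightarrow> (\<lambda>a b. \<Sum>t<T. \<rho> t a b) = (\<lambda>a b. of_nat T * rho_avg T \<rho> a b)"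
  unfolding rho_avg_def by (intro ext) simp

lemma mu_eq:
  assumes "T \<ge> 1" "\<forall>t<T. density d (\<rho> t)" "d \<ge> 1"
  shows "mu d T \<rho> = trace_prod d (rho_avg T \<rho>) (rho_avg T \<rho>) - 1 / of_nat d"
  unfolding mu_def Let_def trace_prod_shift density_trace[OF density_rho_avg[OF assms(1,2)]]
  using assms(3) by (simp add: power2_eq_square)

lemma mu_nonneg:
  assumes "T \<ge> 1" "\<forall>t<T. density d (\<rho> t)"
  shows "0 \<le> Re (mu d T \<rho>)"
proof -
  have "hermitian d (\<lambda>a b. rho_avg T \<rho> a b - (if a = b then 1 / of_nat d else 0))"
    by (rule hermitian_shift[OF density_hermitian[OF density_rho_avg[OF assms]]]) simp
  then show ?thesis unfolding mu_def Let_def by (simp add: trace_prod_self_eq_sum_cmod sum_nonneg)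
qed

section \<open>Permutation operators on the tensor power\<close>

text \<open>The expectation, in the product state, of the operator permuting the tensor factors by \<open>\<pi>\<close>.\<close>
definition perm_trace :: "nat \<Rightarrow> nat \<Rightarrow> (nat \<Rightarrow> nat \<Rightarrow> nat \<Rightarrow> complex) \<Rightarrow> (nat \<Rightarrow> nat) \<Rightarrow> complex"
  where "perm_trace d T \<rho> \<pi> = (\<Sum>xs\<in>basis d T. \<Prod>t<T. \<rho> t (xs ! t) (xs ! \<pi> t))"

lemma finite_basis: "finite (basis d T)"
  unfolding basis_def using finite_lists_length_eq[of "{..<d}" T] by (simp add: conj_commute)

lemma basis_iff: "xs \<in> basis d T \<longleftrightarrow> length xs = T \<and> (\<forall>t<T. xs ! t < d)"
  unfolding basis_def by (auto simp: set_conv_nth)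

lemma sum_basis_PiE:
  "(\<Sum>xs\<in>basis d T. F xs) = (\<Sum>g\<in>PiE {..<T} (\<lambda>_. {..<d}). F (map g [0..<T]))"
proof -
  have map_restrict_nth: "map (restrict ((!) xs) {..<n}) [0..<n] = xs" if "length xs = n" for xs :: "nat list" and n
    using that by (intro nth_equalityI) auto
  show ?thesis
    by (rule sum.reindex_bij_witness[where j = "\<lambda>xs. restrict ((!) xs) {..<T}"
          and i = "\<lambda>g. map g [0..<T]"])
       (auto simp: basis_iff PiE_def extensional_def map_restrict_nth)
qed

lemma sum_PiE_Un_mult:
  fixes F H :: "('a \<Rightarrow> 'b) \<Rightarrow> 'c::semiring_0"
  assumes "M \<inter> J = {}"
  shows "(\<Sum>g\<in>PiE (M \<union> J) D. F (restrict g M) * H (restrict g J))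
       = (\<Sum>x\<in>PiE M D. F x) * (\<Sum>y\<in>PiE J D. H y)"
proof -
  have "(\<Sum>g\<in>PiE (M \<union> J) D. F (restrict g M) * H (restrict g J))
      = (\<Sum>(x, y)\<in>PiE M D \<times> PiE J D. F x * H y)"
    using assms
    by (intro sum.reindex_bij_witness[where j = "\<lambda>g. (restrict g M, restrict g J)"
          and i = "\<lambda>(x, y) t. if t \<in> M then x t else y t"])
       (auto simp: PiE_def extensional_def restrict_def fun_eq_iff)
  also have "\<dots> = (\<Sum>x\<in>PiE M D. F x) * (\<Sum>y\<in>PiE J D. H y)"
    by (subst sum.cartesian_product[symmetric]) (simp add: sum_product)
  finally show ?thesis .
qed

lemma sum_PiE_insert:
  assumes "x \<notin> A"
  shows "(\<Sum>g\<in>PiE (insert x A) B. F g) = (\<Sum>y\<in>B x. \<Sum>g\<in>PiE A B. F (g(x := y)))"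
proof -
  have "(\<Sum>g\<in>PiE (insert x A) B. F g) = (\<Sum>(y, g)\<in>B x \<times> PiE A B. F (g(x := y)))"
    using assms
    by (intro sum.reindex_bij_witness[of _ "\<lambda>(y, g). g(x := y)" "\<lambda>g. (g x, g(x := undefined))"])
       (auto simp: PiE_def extensional_def)
  then show ?thesis by (simp add: sum.cartesian_product)
qed

text \<open>Coordinates fixed by \<open>\<pi>\<close> contribute a factor \<open>Tr \<rho>\<^sub>t = 1\<close> each.\<close>
lemma perm_trace_support:
  assumes M: "M \<subseteq> {..<T}" and fixed: "\<And>t. t < T \<Longrightarrow> t \<notin> M \<Longrightarrow> \<pi> t = t"
    and closed: "\<And>t. t \<in> M \<Longrightarrow> \<pi> t \<in> M" and dens: "\<forall>t<T. density d (\<rho> t)"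
  shows "perm_trace d T \<rho> \<pi> = (\<Sum>g\<in>PiE M (\<lambda>_. {..<d}). \<Prod>t\<in>M. \<rho> t (g t) (g (\<pi> t)))"
proof -
  define J where "J = {..<T} - M"
  have T: "{..<T} = M \<union> J" and disj: "M \<inter> J = {}" and fin: "finite M" "finite J"
    using M unfolding J_def by (auto intro: finite_subset)
  have \<pi>T: "\<pi> t < T" if "t < T" for t
    using that M fixed closed by (cases "t \<in> M") auto
  have "perm_trace d T \<rho> \<pi>
      = (\<Sum>g\<in>PiE (M \<union> J) (\<lambda>_. {..<d}). (\<Prod>t\<in>M. \<rho> t (restrict g M t) (restrict g M (\<pi> t)))
           * (\<Prod>t\<in>J. \<rho> t (restrict g J t) (restrict g J t)))"
    unfolding perm_trace_def sum_basis_PiE T[symmetric]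
  proof (intro sum.cong refl)
    fix g
    have "(\<Prod>t<T. \<rho> t (map g [0..<T] ! t) (map g [0..<T] ! \<pi> t)) = (\<Prod>t\<in>M \<union> J. \<rho> t (g t) (g (\<pi> t)))"
      unfolding T[symmetric] using \<pi>T by (intro prod.cong) auto
    also have "\<dots> = (\<Prod>t\<in>M. \<rho> t (g t) (g (\<pi> t))) * (\<Prod>t\<in>J. \<rho> t (g t) (g t))"
      unfolding prod.union_disjoint[OF fin disj] using fixed
      by (intro arg_cong2[where f = times] prod.cong) (auto simp: J_def)
    finally show "(\<Prod>t<T. \<rho> t (map g [0..<T] ! t) (map g [0..<T] ! \<pi> t))
      = (\<Prod>t\<in>M. \<rho> t (restrict g M t) (restrict g M (\<pi> t))) * (\<Prod>t\<in>J. \<rho> t (restrict g J t) (restrict g J t))"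
      using closed by simp
  qed
  also have "\<dots> = (\<Sum>g\<in>PiE M (\<lambda>_. {..<d}). \<Prod>t\<in>M. \<rho> t (g t) (g (\<pi> t)))
      * (\<Sum>g\<in>PiE J (\<lambda>_. {..<d}). \<Prod>t\<in>J. \<rho> t (g t) (g t))"
    by (rule sum_PiE_Un_mult[OF disj])
  also have "(\<Sum>g\<in>PiE J (\<lambda>_. {..<d}). \<Prod>t\<in>J. \<rho> t (g t) (g t)) = (\<Prod>t\<in>J. \<Sum>a<d. \<rho> t a a)"
    using prod_sum_PiE[where f = "\<lambda>t a. \<rho> t a a" and A = J and B = "\<lambda>_. {..<d}"] fin(2) by simp
  also have "\<dots> = 1"
    using dens density_trace by (intro prod.neutral) (auto simp: J_def)
  finally show ?thesis by simp
qed

lemma perm_trace_id: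
  assumes "\<And>t. t < T \<Longrightarrow> \<pi> t = t" "\<forall>t<T. density d (\<rho> t)"
  shows "perm_trace d T \<rho> \<pi> = 1"
  using perm_trace_support[of "{}" T \<pi> d \<rho>] assms by simp

lemma perm_trace_transpose:
  assumes "i < T" "j < T" "i \<noteq> j" "\<forall>t<T. density d (\<rho> t)"
  shows "perm_trace d T \<rho> (transpose i j) = trace_prod d (\<rho> i) (\<rho> j)"
  using assms by (subst perm_trace_support[where M = "{i, j}"])
    (auto simp: sum_PiE_insert trace_prod_eq)

lemma perm_trace_3cycle:
  assumes "a < T" "b < T" "c < T" "a \<noteq> b" "a \<noteq> c" "b \<noteq> c" "\<pi> a = b" "\<pi> b = c" "\<pi> c = a"
    "\<And>t. t < T \<Longrightarrow> t \<notin> {a, b, c} \<Longrightarrow> \<pi> t = t" "\<forall>t<T. density d (\<rho> t)"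
  shows "perm_trace d T \<rho> \<pi> = trace_prod3 d (\<rho> a) (\<rho> b) (\<rho> c)"
  using assms by (subst perm_trace_support[where M = "{a, b, c}"])
    (auto simp: sum_PiE_insert trace_prod3_def mult_ac)

lemma perm_trace_double_transposition:
  assumes "i < T" "j < T" "k < T" "l < T" "distinct [i, j, k, l]"
    "\<pi> i = j" "\<pi> j = i" "\<pi> k = l" "\<pi> l = k" "\<And>t. t < T \<Longrightarrow> t \<notin> {i, j, k, l} \<Longrightarrow> \<pi> t = t"
    "\<forall>t<T. density d (\<rho> t)"
  shows "perm_trace d T \<rho> \<pi> = trace_prod d (\<rho> i) (\<rho> j) * trace_prod d (\<rho> k) (\<rho> l)"
proof -
  have "perm_trace d T \<rho> \<pi> = (\<Sum>x<d. \<Sum>y<d. \<Sum>z<d. \<Sum>w<d. \<rho> i x y * \<rho> j y x * (\<rho> k z w * \<rho> l w z))"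
    using assms by (subst perm_trace_support[where M = "{i, j, k, l}"]) (auto simp: sum_PiE_insert mult_ac)
  then show ?thesis
    unfolding trace_prod_eq by (simp only: sum_distrib_right, simp only: sum_distrib_left)
qed

section \<open>Expectation and variance of sums of swaps\<close>

definition perm_matrix :: "('i \<Rightarrow> 'i) \<Rightarrow> 'i \<Rightarrow> 'i \<Rightarrow> complex"
  where "perm_matrix f x y = (if x = f y then 1 else 0)"

lemma expect_eq: "expect I P Y = (\<Sum>x\<in>I. \<Sum>y\<in>I. P x y * Y y x)"
  unfolding expect_def mat_trace_def mat_mult_def ..

lemma expect_cong:
  "(\<And>x y. x \<in> I \<Longrightarrow> y \<in> I \<Longrightarrow> Y x y = Y' x y) \<Longrightarrow> expect I P Y = expect I P Y'"
  unfolding expect_eq by (intro sum.cong refl) auto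

lemma expect_add: "expect I P (\<lambda>x y. X x y + Y x y) = expect I P X + expect I P Y"
  unfolding expect_eq by (simp add: algebra_simps sum.distrib)

lemma expect_scale: "expect I P (\<lambda>x y. c * X x y) = c * expect I P X"
  unfolding expect_eq by (simp add: algebra_simps sum_distrib_left)

lemma expect_sum: "expect I P (\<lambda>x y. \<Sum>k\<in>K. X k x y) = (\<Sum>k\<in>K. expect I P (X k))"
  unfolding expect_eq sum_distrib_left by (rule sum_rotate3[symmetric])

lemma expect_perm_matrix:
  assumes "finite I" "f ` I \<subseteq> I"
  shows "expect I P (perm_matrix f) = (\<Sum>x\<in>I. P x (f x))"
  unfolding expect_eq perm_matrix_def using assms by (simp add: mult_if_zero sum.delta image_subset_iff)

lemma mat_mult_perm_matrix:
  assumes "finite I" "g y \<in> I"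
  shows "mat_mult I (perm_matrix f) (perm_matrix g) x y = perm_matrix (f \<circ> g) x y"
  unfolding mat_mult_def perm_matrix_def using assms by (simp add: mult_if_zero sum.delta')

lemma id_op_eq: "id_op = perm_matrix id"
  unfolding id_op_def perm_matrix_def by (intro ext) simp

definition swap_entries :: "nat \<Rightarrow> nat \<Rightarrow> 'a list \<Rightarrow> 'a list"
  where "swap_entries i j ys = ys[i := ys ! j, j := ys ! i]"

lemma swap_op_eq: "swap_op i j = perm_matrix (swap_entries i j)"
  unfolding swap_op_def perm_matrix_def swap_entries_def ..

lemma transpose_less: "i < T \<Longrightarrow> j < T \<Longrightarrow> t < T \<Longrightarrow> transpose i j t < T"
  by (simp add: transpose_def)

lemma nth_swap_entries:
  "i < length ys \<Longrightarrow> j < length ys \<Longrightarrow> t < length ys \<Longrightarrow> swap_entries i j ys ! t = ys ! transpose i j t"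
  unfolding swap_entries_def by (auto simp: nth_list_update transpose_def)

lemma swap_entries_in_basis:
  assumes "ys \<in> basis d T" "i < T" "j < T"
  shows "swap_entries i j ys \<in> basis d T"
    and "t < T \<Longrightarrow> swap_entries i j ys ! t = ys ! transpose i j t"
  using assms unfolding basis_iff
  by (auto simp: nth_swap_entries transpose_less) (simp_all add: swap_entries_def)

lemma expect_prod_state_perm_matrix:
  assumes "f ` basis d T \<subseteq> basis d T" "\<And>ys t. ys \<in> basis d T \<Longrightarrow> t < T \<Longrightarrow> f ys ! t = ys ! \<pi> t"
  shows "expect (basis d T) (prod_state T \<rho>) (perm_matrix f) = perm_trace d T \<rho> \<pi>"
  unfolding expect_perm_matrix[OF finite_basis assms(1)] perm_trace_def prod_state_def
  using assms(2) by (intro sum.cong refl prod.cong) auto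

lemma expect_id_op:
  assumes "\<forall>t<T. density d (\<rho> t)"
  shows "expect (basis d T) (prod_state T \<rho>) id_op = 1"
proof -
  have "expect (basis d T) (prod_state T \<rho>) id_op = perm_trace d T \<rho> id"
    unfolding id_op_eq by (rule expect_prod_state_perm_matrix) auto
  also have "\<dots> = 1" using assms by (intro perm_trace_id) auto
  finally show ?thesis .
qed

lemma expect_swap_op:
  assumes "i < T" "j < T"
  shows "expect (basis d T) (prod_state T \<rho>) (swap_op i j) = perm_trace d T \<rho> (transpose i j)"
  unfolding swap_op_eq using assms
  by (intro expect_prod_state_perm_matrix) (auto simp: swap_entries_in_basis)

lemma expect_swap_op_mult:
  assumes "i < T" "j < T" "k < T" "l < T"
  shows "expect (basis d T) (prod_state T \<rho>) (mat_mult (basis d T) (swap_op i j) (swap_op k l))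
       = perm_trace d T \<rho> (transpose k l \<circ> transpose i j)"
proof -
  have "expect (basis d T) (prod_state T \<rho>) (mat_mult (basis d T) (swap_op i j) (swap_op k l))
      = expect (basis d T) (prod_state T \<rho>) (perm_matrix (swap_entries i j \<circ> swap_entries k l))"
    unfolding swap_op_eq using assms
    by (intro expect_cong mat_mult_perm_matrix finite_basis swap_entries_in_basis)
  also have "\<dots> = perm_trace d T \<rho> (transpose k l \<circ> transpose i j)"
  proof (rule expect_prod_state_perm_matrix)
    show "(swap_entries i j \<circ> swap_entries k l) ` basis d T \<subseteq> basis d T"
      using assms by (auto simp: swap_entries_in_basis)
    fix ys t assume ys: "ys \<in> basis d T" and t: "t < T"
    have kl: "swap_entries k l ys \<in> basis d T" by (rule swap_entries_in_basis(1)[OF ys assms(3,4)])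
    have "swap_entries i j (swap_entries k l ys) ! t = swap_entries k l ys ! transpose i j t"
      by (rule swap_entries_in_basis(2)[OF kl assms(1,2) t])
    also have "\<dots> = ys ! transpose k l (transpose i j t)"
      by (rule swap_entries_in_basis(2)[OF ys assms(3,4) transpose_less[OF assms(1,2) t]])
    finally show "(swap_entries i j \<circ> swap_entries k l) ys ! t = ys ! (transpose k l \<circ> transpose i j) t"
      by simp
  qed
  finally show ?thesis .
qed

lemma variance_affine:
  fixes X :: "nat list \<Rightarrow> nat list \<Rightarrow> complex"
  assumes "finite I" "expect I P id_op = 1"
  shows "variance I P (\<lambda>x y. a * X x y + b * id_op x y) = a\<^sup>2 * variance I P X"
proof -
  have "mat_mult I (\<lambda>x y. a * X x y + b * id_op x y) (\<lambda>x y. a * X x y + b * id_op x y) x y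
      = a\<^sup>2 * mat_mult I X X x y + (2 * a * b) * X x y + b\<^sup>2 * id_op x y" if "x \<in> I" "y \<in> I" for x y
    unfolding mat_mult_def id_op_def using assms(1) that
    by (simp add: algebra_simps power2_eq_square sum.distrib sum_distrib_left mult_if_zero sum.delta sum.delta')
  then have "expect I P (mat_mult I (\<lambda>x y. a * X x y + b * id_op x y) (\<lambda>x y. a * X x y + b * id_op x y))
      = expect I P (\<lambda>x y. a\<^sup>2 * mat_mult I X X x y + (2 * a * b) * X x y + b\<^sup>2 * id_op x y)"
    by (rule expect_cong)
  then show ?thesis
    unfolding variance_def by (simp only: expect_add expect_scale assms(2)) (simp add: power2_eq_square algebra_simps)
qed

lemma variance_sum:
  "variance I P (\<lambda>x y. \<Sum>k\<in>K. X k x y)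
   = (\<Sum>k\<in>K. \<Sum>l\<in>K. expect I P (mat_mult I (X k) (X l)) - expect I P (X k) * expect I P (X l))"
proof -
  have "mat_mult I (\<lambda>x y. \<Sum>k\<in>K. X k x y) (\<lambda>x y. \<Sum>k\<in>K. X k x y)
      = (\<lambda>x y. \<Sum>k\<in>K. \<Sum>l\<in>K. mat_mult I (X k) (X l) x y)"
    unfolding mat_mult_def sum_product by (intro ext) (rule sum_rotate3)
  then show ?thesis
    unfolding variance_def by (simp add: expect_sum power2_eq_square sum_product sum_subtractf)
qed

definition off_diag :: "nat \<Rightarrow> (nat \<times> nat) set"
  where "off_diag T = (SIGMA i:{..<T}. {..<T} - {i})"

definition swap_sum :: "nat \<Rightarrow> nat list \<Rightarrow> nat list \<Rightarrow> complex"
  where "swap_sum T xs ys = (\<Sum>(i, j)\<in>off_diag T. swap_op i j xs ys)"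

lemma swap_sum_eq: "swap_sum T = (\<lambda>xs ys. \<Sum>p\<in>off_diag T. swap_op (fst p) (snd p) xs ys)"
  unfolding swap_sum_def[abs_def] split_def ..

lemma mem_off_diag: "(i, j) \<in> off_diag T \<longleftrightarrow> i < T \<and> j < T \<and> i \<noteq> j"
  unfolding off_diag_def by auto

lemma sum_off_diag_nested: "(\<Sum>(i, j)\<in>off_diag T. f i j) = (\<Sum>i<T. \<Sum>j\<in>{..<T} - {i}. f i j)"
  unfolding off_diag_def by (subst sum.Sigma) auto

lemma sum_off_diag:
  fixes f :: "nat \<Rightarrow> nat \<Rightarrow> 'a::ab_group_add"
  shows "(\<Sum>(i, j)\<in>off_diag T. f i j) = (\<Sum>i<T. \<Sum>j<T. f i j) - (\<Sum>i<T. f i i)"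
  unfolding sum_off_diag_nested by (simp add: sum_diff1 sum_subtractf)

lemma A_op_eq: "A_op d T = (\<lambda>xs ys. (1 / (of_nat T)\<^sup>2) * swap_sum T xs ys + (- 1 / of_nat d) * id_op xs ys)"
  unfolding A_op_def swap_sum_def off_diag_def by (intro ext) (simp add: sum.Sigma field_simps)

lemma sum_trace_prod_rho_avg:
  "T \<ge> 1 \<Longrightarrow> (\<Sum>t<T. trace_prod d X (\<rho> t)) = of_nat T * trace_prod d X (rho_avg T \<rho>)"
  unfolding trace_prod_sum_right sum_states_eq_rho_avg by (rule trace_prod_scale_right)

lemma expect_A_op:
  assumes "d \<ge> 1" "T \<ge> 1" "\<forall>t<T. density d (\<rho> t)"
  shows "expect (basis d T) (prod_state T \<rho>) (A_op d T)
    = mu d T \<rho> - (\<Sum>i<T. trace_prod d (\<rho> i) (\<rho> i)) / (of_nat T)\<^sup>2"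
proof -
  let ?R = "rho_avg T \<rho>"
  have "expect (basis d T) (prod_state T \<rho>) (swap_sum T)
      = (\<Sum>p\<in>off_diag T. expect (basis d T) (prod_state T \<rho>) (swap_op (fst p) (snd p)))"
    unfolding swap_sum_eq by (rule expect_sum)
  also have "\<dots> = (\<Sum>(i, j)\<in>off_diag T. trace_prod d (\<rho> i) (\<rho> j))"
    using assms(3) by (intro sum.cong refl) (auto simp: mem_off_diag expect_swap_op perm_trace_transpose)
  also have "\<dots> = (of_nat T)\<^sup>2 * trace_prod d ?R ?R - (\<Sum>i<T. trace_prod d (\<rho> i) (\<rho> i))"
  proof -
    have "(\<Sum>i<T. \<Sum>j<T. trace_prod d (\<rho> i) (\<rho> j)) = of_nat T * (\<Sum>i<T. trace_prod d (\<rho> i) ?R)"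
      by (simp add: sum_trace_prod_rho_avg[OF assms(2)] sum_distrib_left)
    also have "\<dots> = of_nat T * (\<Sum>i<T. trace_prod d ?R (\<rho> i))"
      by (subst trace_prod_commute) (rule refl)
    also have "\<dots> = (of_nat T)\<^sup>2 * trace_prod d ?R ?R"
      by (simp add: sum_trace_prod_rho_avg[OF assms(2)] power2_eq_square)
    finally show ?thesis by (simp add: sum_off_diag)
  qed
  finally show ?thesis
    unfolding A_op_eq expect_add expect_scale expect_id_op[OF assms(3)] mu_eq[OF assms(2,3,1)]
    using assms(2) by (simp add: field_simps)
qed

section \<open>Covariances of swaps\<close>

definition swap_cov :: "nat \<Rightarrow> nat \<Rightarrow> (nat \<Rightarrow> nat \<Rightarrow> nat \<Rightarrow> complex) \<Rightarrow> nat \<Rightarrow> nat \<Rightarrow> nat \<Rightarrow> nat \<Rightarrow> complex"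
  where "swap_cov d T \<rho> i j k l = perm_trace d T \<rho> (transpose k l \<circ> transpose i j)
          - perm_trace d T \<rho> (transpose i j) * perm_trace d T \<rho> (transpose k l)"

lemma variance_swap_sum:
  "variance (basis d T) (prod_state T \<rho>) (swap_sum T)
   = (\<Sum>(i, j)\<in>off_diag T. \<Sum>(k, l)\<in>off_diag T. swap_cov d T \<rho> i j k l)"
proof -
  have "variance (basis d T) (prod_state T \<rho>) (swap_sum T)
    = (\<Sum>p\<in>off_diag T. \<Sum>q\<in>off_diag T.
        expect (basis d T) (prod_state T \<rho>)
          (mat_mult (basis d T) (swap_op (fst p) (snd p)) (swap_op (fst q) (snd q)))
        - expect (basis d T) (prod_state T \<rho>) (swap_op (fst p) (snd p))
          * expect (basis d T) (prod_state T \<rho>) (swap_op (fst q) (snd q)))"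
    unfolding swap_sum_eq by (rule variance_sum)
  also have "\<dots> = (\<Sum>(i, j)\<in>off_diag T. \<Sum>(k, l)\<in>off_diag T. swap_cov d T \<rho> i j k l)"
    by (auto simp: off_diag_def split_def expect_swap_op expect_swap_op_mult swap_cov_def intro!: sum.cong)
  finally show ?thesis .
qed

definition shared_cov :: "nat \<Rightarrow> (nat \<Rightarrow> nat \<Rightarrow> nat \<Rightarrow> complex) \<Rightarrow> nat \<Rightarrow> nat \<Rightarrow> nat \<Rightarrow> complex"
  where "shared_cov d \<rho> a b c =
    trace_prod3 d (\<rho> a) (\<rho> b) (\<rho> c) - trace_prod d (\<rho> a) (\<rho> b) * trace_prod d (\<rho> a) (\<rho> c)"

definition coincidences :: "nat \<Rightarrow> nat \<Rightarrow> nat \<Rightarrow> real"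
  where "coincidences a b c = of_bool (a = b) + of_bool (a = c) + of_bool (b = c)"

definition shared_cov_majorant :: "nat \<Rightarrow> (nat \<Rightarrow> nat \<Rightarrow> nat \<Rightarrow> complex) \<Rightarrow> nat \<Rightarrow> nat \<Rightarrow> nat \<Rightarrow> real"
  where "shared_cov_majorant d \<rho> a b c = Re (shared_cov d \<rho> a b c) + 2 * coincidences a b c"

text \<open>Two swaps on disjoint pairs are independent; pairs sharing one index contribute a
  \<^const>\<open>shared_cov\<close> term. The correction by \<^const>\<open>coincidences\<close> makes every summand nonnegative
  on degenerate index patterns, so the majorant may be summed over all quadruples.\<close>
definition swap_cov_majorant :: "nat \<Rightarrow> (nat \<Rightarrow> nat \<Rightarrow> nat \<Rightarrow> complex) \<Rightarrow> nat \<Rightarrow> nat \<Rightarrow> nat \<Rightarrow> nat \<Rightarrow> real"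
  where "swap_cov_majorant d \<rho> i j k l =
     (if i = k then shared_cov_majorant d \<rho> i j l else 0) + (if i = l then shared_cov_majorant d \<rho> i j k else 0)
   + (if j = k then shared_cov_majorant d \<rho> j i l else 0) + (if j = l then shared_cov_majorant d \<rho> j i k else 0)
   + (if i = k \<and> j = l then 2 else 0) + (if i = l \<and> j = k then 2 else 0)"

lemma shared_cov_lower_bound:
  assumes "\<forall>t<T. density d (\<rho> t)" "a < T" "b < T" "c < T"
  shows "- 2 \<le> Re (shared_cov d \<rho> a b c)"
proof -
  have "cmod (shared_cov d \<rho> a b c)
      \<le> cmod (trace_prod3 d (\<rho> a) (\<rho> b) (\<rho> c)) + cmod (trace_prod d (\<rho> a) (\<rho> b)) * cmod (trace_prod d (\<rho> a) (\<rho> c))"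
    unfolding shared_cov_def by (metis norm_mult norm_triangle_ineq4)
  also have "\<dots> \<le> 1 + 1 * 1"
    using assms by (intro add_mono mult_mono trace_prod_density_le trace_prod3_density_le) auto
  finally show ?thesis using abs_Re_le_cmod[of "shared_cov d \<rho> a b c"] by linarith
qed

lemma shared_cov_majorant_nonneg:
  assumes "\<forall>t<T. density d (\<rho> t)" "a < T" "b < T" "c < T" "\<not> distinct [a, b, c]"
  shows "0 \<le> shared_cov_majorant d \<rho> a b c"
proof -
  have "1 \<le> coincidences a b c" using assms(5) unfolding coincidences_def by auto
  then show ?thesis unfolding shared_cov_majorant_def using shared_cov_lower_bound[OF assms(1-4)] by linarith
qed

lemma shared_cov_majorant_distinct:
  "distinct [a, b, c] \<Longrightarrow> shared_cov_majorant d \<rho> a b c = Re (shared_cov d \<rho> a b c)"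
  unfolding shared_cov_majorant_def coincidences_def by simp

lemma swap_cov_commute:
  "swap_cov d T \<rho> j i k l = swap_cov d T \<rho> i j k l" "swap_cov d T \<rho> i j l k = swap_cov d T \<rho> i j k l"
  unfolding swap_cov_def by (simp_all add: transpose_commute)

lemma swap_cov_majorant_commute:
  "swap_cov_majorant d \<rho> j i k l = swap_cov_majorant d \<rho> i j k l"
  "swap_cov_majorant d \<rho> i j l k = swap_cov_majorant d \<rho> i j k l"
  unfolding swap_cov_majorant_def by (simp_all only: add.assoc add.commute add.left_commute conj_commute)

lemma swap_cov_le_majorant_shared:
  assumes "i < T" "j < T" "l < T" "i \<noteq> j" "i \<noteq> l" and dens: "\<forall>t<T. density d (\<rho> t)"
  shows "Re (swap_cov d T \<rho> i j i l) \<le> swap_cov_majorant d \<rho> i j i l"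
proof (cases "j = l")
  case True
  have "perm_trace d T \<rho> (transpose i j \<circ> transpose i j) = 1"
    using dens by (intro perm_trace_id) auto
  then have "Re (swap_cov d T \<rho> i j i l) = 1 - Re ((trace_prod d (\<rho> i) (\<rho> j))\<^sup>2)"
    unfolding swap_cov_def using assms True by (simp add: perm_trace_transpose power2_eq_square)
  also have "\<dots> \<le> 1 + cmod ((trace_prod d (\<rho> i) (\<rho> j))\<^sup>2)"
    using abs_Re_le_cmod[of "(trace_prod d (\<rho> i) (\<rho> j))\<^sup>2"] by linarith
  also have "\<dots> \<le> 2"
    using trace_prod_density_le[of d "\<rho> i" "\<rho> j"] assms by (simp add: norm_power power_le_one)
  also have "\<dots> \<le> swap_cov_majorant d \<rho> i j i l"
    using assms True shared_cov_majorant_nonneg[OF dens, of i j j] shared_cov_majorant_nonneg[OF dens, of j i i]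
    unfolding swap_cov_majorant_def by simp
  finally show ?thesis .
next
  case False
  have "perm_trace d T \<rho> (transpose i l \<circ> transpose i j) = trace_prod3 d (\<rho> i) (\<rho> j) (\<rho> l)"
    using assms False by (intro perm_trace_3cycle) auto
  then have "swap_cov d T \<rho> i j i l = shared_cov d \<rho> i j l"
    unfolding swap_cov_def shared_cov_def using assms by (simp add: perm_trace_transpose)
  then show ?thesis
    unfolding swap_cov_majorant_def using assms False by (simp add: shared_cov_majorant_distinct)
qed

lemma swap_cov_le_majorant:
  assumes "i < T" "j < T" "k < T" "l < T" "i \<noteq> j" "k \<noteq> l" and dens: "\<forall>t<T. density d (\<rho> t)"
  shows "Re (swap_cov d T \<rho> i j k l) \<le> swap_cov_majorant d \<rho> i j k l"
proof -
  consider "i = k" | "i = l" | "j = k" | "j = l" | "distinct [i, j, k, l]"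
    using assms by auto
  then show ?thesis
  proof cases
    case 1
    then show ?thesis using swap_cov_le_majorant_shared[OF assms(1,2,4)] assms by simp
  next
    case 2
    then show ?thesis using swap_cov_le_majorant_shared[OF assms(1,2,3)] assms
      by (simp add: swap_cov_commute swap_cov_majorant_commute)
  next
    case 3
    then show ?thesis using swap_cov_le_majorant_shared[OF assms(2,1,4)] assms
      by (simp add: swap_cov_commute swap_cov_majorant_commute)
  next
    case 4
    then show ?thesis using swap_cov_le_majorant_shared[OF assms(2,1,3)] assms
      by (simp add: swap_cov_commute swap_cov_majorant_commute)
  next
    case 5
    have "perm_trace d T \<rho> (transpose k l \<circ> transpose i j)
        = trace_prod d (\<rho> i) (\<rho> j) * trace_prod d (\<rho> k) (\<rho> l)"
      using assms 5 by (intro perm_trace_double_transposition) auto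
    then have "swap_cov d T \<rho> i j k l = 0"
      unfolding swap_cov_def using assms 5 by (simp add: perm_trace_transpose)
    then show ?thesis unfolding swap_cov_majorant_def using 5 by simp
  qed
qed

lemma swap_cov_majorant_nonneg:
  assumes "i < T" "j < T" "k < T" "l < T" "i = j \<or> k = l" and dens: "\<forall>t<T. density d (\<rho> t)"
  shows "0 \<le> swap_cov_majorant d \<rho> i j k l"
proof -
  have summand: "0 \<le> (if P then shared_cov_majorant d \<rho> a b c else 0)"
    if "P \<Longrightarrow> a < T \<and> b < T \<and> c < T \<and> \<not> distinct [a, b, c]" for P a b c
    using that shared_cov_majorant_nonneg[OF dens] by auto
  show ?thesis
    unfolding swap_cov_majorant_def using assms by (intro add_nonneg_nonneg summand) auto
qed

lemma sum_off_diag_le: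
  fixes f :: "nat \<Rightarrow> nat \<Rightarrow> nat \<Rightarrow> nat \<Rightarrow> real"
  assumes "\<And>i j k l. i < T \<Longrightarrow> j < T \<Longrightarrow> k < T \<Longrightarrow> l < T \<Longrightarrow> i = j \<or> k = l \<Longrightarrow> 0 \<le> f i j k l"
  shows "(\<Sum>(i, j)\<in>off_diag T. \<Sum>(k, l)\<in>off_diag T. f i j k l) \<le> (\<Sum>i<T. \<Sum>j<T. \<Sum>k<T. \<Sum>l<T. f i j k l)"
proof -
  have "(\<Sum>(i, j)\<in>off_diag T. \<Sum>(k, l)\<in>off_diag T. f i j k l)
      = (\<Sum>i<T. \<Sum>j\<in>{..<T} - {i}. \<Sum>k<T. \<Sum>l\<in>{..<T} - {k}. f i j k l)"
    by (simp only: sum_off_diag_nested)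
  also have "\<dots> \<le> (\<Sum>i<T. \<Sum>j\<in>{..<T} - {i}. \<Sum>k<T. \<Sum>l<T. f i j k l)"
    by (intro sum_mono sum_mono2) (auto intro: assms)
  also have "\<dots> \<le> (\<Sum>i<T. \<Sum>j<T. \<Sum>k<T. \<Sum>l<T. f i j k l)"
    by (intro sum_mono sum_mono2) (auto intro!: sum_nonneg assms)
  finally show ?thesis .
qed

lemma sum_swap_cov_majorant:
  "(\<Sum>i<T. \<Sum>j<T. \<Sum>k<T. \<Sum>l<T. swap_cov_majorant d \<rho> i j k l)
   = 4 * (\<Sum>a<T. \<Sum>b<T. \<Sum>c<T. shared_cov_majorant d \<rho> a b c) + 4 * (real T)\<^sup>2"
proof -
  let ?m = "shared_cov_majorant d \<rho>"
  have and_if: "(if P \<and> Q then x else 0) = (if P then if Q then x else 0 else 0)" for P Q and x :: real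
    by simp
  have "(\<Sum>i<T. \<Sum>j<T. \<Sum>k<T. \<Sum>l<T. if i = k then ?m i j l else 0) = (\<Sum>i<T. \<Sum>j<T. \<Sum>l<T. ?m i j l)"
    "(\<Sum>i<T. \<Sum>j<T. \<Sum>k<T. \<Sum>l<T. if i = l then ?m i j k else 0) = (\<Sum>i<T. \<Sum>j<T. \<Sum>k<T. ?m i j k)"
    "(\<Sum>i<T. \<Sum>j<T. \<Sum>k<T. \<Sum>l<T. if j = k then ?m j i l else 0) = (\<Sum>i<T. \<Sum>j<T. \<Sum>l<T. ?m j i l)"
    "(\<Sum>i<T. \<Sum>j<T. \<Sum>k<T. \<Sum>l<T. if j = l then ?m j i k else 0) = (\<Sum>i<T. \<Sum>j<T. \<Sum>k<T. ?m j i k)"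
    "(\<Sum>i<T. \<Sum>j<T. \<Sum>k<T. \<Sum>l<T. if i = k \<and> j = l then 2 else 0) = 2 * (real T)\<^sup>2"
    "(\<Sum>i<T. \<Sum>j<T. \<Sum>k<T. \<Sum>l<T. if i = l \<and> j = k then 2 else 0) = 2 * (real T)\<^sup>2"
    by (simp_all add: sum_if_zero sum.delta sum.delta' and_if power2_eq_square)
  moreover have "(\<Sum>i<T. \<Sum>j<T. \<Sum>l<T. ?m j i l) = (\<Sum>a<T. \<Sum>b<T. \<Sum>c<T. ?m a b c)"
    by (rule sum.swap)
  ultimately show ?thesis
    unfolding swap_cov_majorant_def sum.distrib by simp
qed

lemma sum_coincidences: "(\<Sum>a<T. \<Sum>b<T. \<Sum>c<T. coincidences a b c) = 3 * (real T)\<^sup>2"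
  unfolding coincidences_def of_bool_def
  by (simp add: sum.distrib sum_if_zero mult_if_zero sum.delta sum.delta' power2_eq_square)

lemma sum_shared_cov_majorant:
  "(\<Sum>a<T. \<Sum>b<T. \<Sum>c<T. shared_cov_majorant d \<rho> a b c)
   = Re (\<Sum>a<T. \<Sum>b<T. \<Sum>c<T. shared_cov d \<rho> a b c) + 6 * (real T)\<^sup>2"
  unfolding shared_cov_majorant_def by (simp add: sum.distrib sum_distrib_left[symmetric] sum_coincidences)

lemma trace_prod3_sum_rho_avg:
  assumes "T \<ge> 1"
  shows "(\<Sum>t<T. trace_prod3 d (\<rho> t) Y Z) = of_nat T * trace_prod3 d (rho_avg T \<rho>) Y Z"
    and "(\<Sum>t<T. trace_prod3 d X (\<rho> t) Z) = of_nat T * trace_prod3 d X (rho_avg T \<rho>) Z"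
    and "(\<Sum>t<T. trace_prod3 d X Y (\<rho> t)) = of_nat T * trace_prod3 d X Y (rho_avg T \<rho>)"
proof -
  show first: "(\<Sum>t<T. trace_prod3 d (\<rho> t) Y Z) = of_nat T * trace_prod3 d (rho_avg T \<rho>) Y Z" for Y Z
    unfolding trace_prod3_sum_left sum_states_eq_rho_avg[OF assms] by (rule trace_prod3_scale)
  show second: "(\<Sum>t<T. trace_prod3 d X (\<rho> t) Z) = of_nat T * trace_prod3 d X (rho_avg T \<rho>) Z" for X Z
    by (simp only: trace_prod3_rotate[of d X] first)
  show "(\<Sum>t<T. trace_prod3 d X Y (\<rho> t)) = of_nat T * trace_prod3 d X Y (rho_avg T \<rho>)"
    by (simp only: trace_prod3_rotate[of d X Y] second)
qed

text \<open>With \<open>R\<close> the average state and \<open>y\<^sub>a = Tr[\<rho>\<^sub>a R]\<close>, Cauchy-Schwarz gives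
  \<open>\<Sum>\<^sub>a y\<^sub>a\<^sup>2 \<ge> T (Tr R\<^sup>2)\<^sup>2\<close>, which reduces the claim to the one-state inequality
  \<open>Tr R\<^sup>3 - (Tr R\<^sup>2)\<^sup>2 \<le> \<mu>\<close>.\<close>
lemma sum_shared_cov_le:
  assumes d: "d \<ge> 1" and T: "T \<ge> 1" and dens: "\<forall>t<T. density d (\<rho> t)"
  shows "Re (\<Sum>a<T. \<Sum>b<T. \<Sum>c<T. shared_cov d \<rho> a b c) \<le> (real T)^3 * Re (mu d T \<rho>)"
proof -
  define R where "R = rho_avg T \<rho>"
  define y where "y a = Re (trace_prod d (\<rho> a) R)" for a
  have R: "density d R" unfolding R_def by (rule density_rho_avg[OF T dens])
  have row: "(\<Sum>b<T. trace_prod d (\<rho> a) (\<rho> b)) = of_real (real T * y a)" if "a < T" for a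
  proof -
    have "trace_prod d (\<rho> a) R \<in> \<real>"
      using that dens by (intro trace_prod_real density_hermitian R) auto
    then show ?thesis unfolding y_def R_def sum_trace_prod_rho_avg[OF T] by simp
  qed
  have "(\<Sum>a<T. y a) = Re (\<Sum>a<T. trace_prod d R (\<rho> a))"
    unfolding y_def by (simp add: trace_prod_commute[of d R])
  also have "\<dots> = real T * Re (trace_prod d R R)"
    unfolding R_def sum_trace_prod_rho_avg[OF T] by simp
  finally have sum_y: "(\<Sum>a<T. y a) = real T * Re (trace_prod d R R)" .
  have "(\<Sum>a<T. y a)\<^sup>2 \<le> (\<Sum>a<T. (y a)\<^sup>2) * real T"
    using sum_squared_le_sum_of_squares[of y "{..<T}"] by simp
  then have cauchy: "(real T)^3 * (Re (trace_prod d R R))\<^sup>2 \<le> (real T)\<^sup>2 * (\<Sum>a<T. (y a)\<^sup>2)"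
    unfolding sum_y using T by (simp add: power2_eq_square power3_eq_cube algebra_simps)
  have "Re (\<Sum>a<T. \<Sum>b<T. \<Sum>c<T. shared_cov d \<rho> a b c)
      = (real T)^3 * Re (trace_prod3 d R R R) - (real T)\<^sup>2 * (\<Sum>a<T. (y a)\<^sup>2)"
  proof -
    have "(\<Sum>a<T. \<Sum>b<T. \<Sum>c<T. trace_prod3 d (\<rho> a) (\<rho> b) (\<rho> c)) = (of_nat T)^3 * trace_prod3 d R R R"
      unfolding R_def by (simp add: trace_prod3_sum_rho_avg[OF T] sum_distrib_left[symmetric] power3_eq_cube)
    moreover have "(\<Sum>a<T. \<Sum>b<T. \<Sum>c<T. trace_prod d (\<rho> a) (\<rho> b) * trace_prod d (\<rho> a) (\<rho> c))
        = of_real ((real T)\<^sup>2 * (\<Sum>a<T. (y a)\<^sup>2))"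
      by (simp add: sum_product[symmetric] row sum_distrib_left power2_eq_square mult_ac)
    ultimately show ?thesis
      unfolding shared_cov_def by (simp add: sum_subtractf)
  qed
  also have "\<dots> \<le> (real T)^3 * (Re (trace_prod3 d R R R) - (Re (trace_prod d R R))\<^sup>2)"
    using cauchy by (simp add: algebra_simps)
  also have "\<dots> \<le> (real T)^3 * Re (mu d T \<rho>)"
    using density_trace_prod3_le[OF R d] unfolding mu_eq[OF T dens d] R_def
    by (intro mult_left_mono) auto
  finally show ?thesis .
qed

lemma variance_swap_sum_le:
  assumes d: "d \<ge> 1" and T: "T \<ge> 1" and dens: "\<forall>t<T. density d (\<rho> t)"
  shows "Re (variance (basis d T) (prod_state T \<rho>) (swap_sum T))
    \<le> 4 * (real T)^3 * Re (mu d T \<rho>) + 28 * (real T)\<^sup>2"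
proof -
  have "Re (variance (basis d T) (prod_state T \<rho>) (swap_sum T))
      = (\<Sum>(i, j)\<in>off_diag T. \<Sum>(k, l)\<in>off_diag T. Re (swap_cov d T \<rho> i j k l))"
    unfolding variance_swap_sum by (simp add: split_def)
  also have "\<dots> \<le> (\<Sum>(i, j)\<in>off_diag T. \<Sum>(k, l)\<in>off_diag T. swap_cov_majorant d \<rho> i j k l)"
    using dens by (auto simp: off_diag_def split_def intro!: sum_mono swap_cov_le_majorant)
  also have "\<dots> \<le> (\<Sum>i<T. \<Sum>j<T. \<Sum>k<T. \<Sum>l<T. swap_cov_majorant d \<rho> i j k l)"
    using dens by (intro sum_off_diag_le swap_cov_majorant_nonneg)
  also have "\<dots> = 4 * Re (\<Sum>a<T. \<Sum>b<T. \<Sum>c<T. shared_cov d \<rho> a b c) + 28 * (real T)\<^sup>2"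
    unfolding sum_swap_cov_majorant sum_shared_cov_majorant by simp
  also have "\<dots> \<le> 4 * (real T)^3 * Re (mu d T \<rho>) + 28 * (real T)\<^sup>2"
    using sum_shared_cov_le[OF assms] by simp
  finally show ?thesis .
qed

lemma expect_A_op_sub_mu_le:
  assumes "d \<ge> 1" "T \<ge> 1" "\<forall>t<T. density d (\<rho> t)"
  shows "cmod (expect (basis d T) (prod_state T \<rho>) (A_op d T) - mu d T \<rho>) \<le> 1 / real T"
proof -
  have "cmod (expect (basis d T) (prod_state T \<rho>) (A_op d T) - mu d T \<rho>)
      = cmod (\<Sum>i<T. trace_prod d (\<rho> i) (\<rho> i)) / (real T)\<^sup>2"
    unfolding expect_A_op[OF assms] by (simp add: norm_divide norm_power)
  also have "\<dots> \<le> (\<Sum>i<T. 1) / (real T)\<^sup>2"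
    using assms(3)
    by (intro divide_right_mono order.trans[OF norm_sum sum_mono] trace_prod_density_le) auto
  also have "\<dots> = 1 / real T" by (simp add: power2_eq_square)
  finally show ?thesis .
qed

lemma variance_A_op_le:
  assumes d: "d \<ge> 1" and T: "T \<ge> 1" and dens: "\<forall>t<T. density d (\<rho> t)"
  shows "Re (variance (basis d T) (prod_state T \<rho>) (A_op d T)) \<le> 28 * (Re (mu d T \<rho>) / real T + 1 / (real T)\<^sup>2)"
proof -
  have "Re (variance (basis d T) (prod_state T \<rho>) (A_op d T))
      = Re (variance (basis d T) (prod_state T \<rho>) (swap_sum T)) / (real T)^4"
    unfolding A_op_eq variance_affine[OF finite_basis expect_id_op[OF dens]]
    by (simp add: power_divide power2_eq_square power4_eq_xxxx Re_divide_of_nat[symmetric])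
  also have "\<dots> \<le> (4 * (real T)^3 * Re (mu d T \<rho>) + 28 * (real T)\<^sup>2) / (real T)^4"
    using variance_swap_sum_le[OF assms] by (intro divide_right_mono) auto
  also have "\<dots> = 4 * (Re (mu d T \<rho>) / real T) + 28 * (1 / (real T)\<^sup>2)"
    using T by (simp add: field_simps power2_eq_square power3_eq_cube power4_eq_xxxx)
  also have "\<dots> \<le> 28 * (Re (mu d T \<rho>) / real T + 1 / (real T)\<^sup>2)"
  proof -
    have "4 * x + 28 * y \<le> 28 * (x + y)" if "0 \<le> x" for x y :: real
      using that by (simp add: algebra_simps)
    then show ?thesis using divide_nonneg_nonneg[OF mu_nonneg[OF T dens] of_nat_0_le_iff[of T]] .
  qed
  finally show ?thesis .
qed

theorem lemma7p2:
  "\<exists>K::real. K > 0 \<and>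
     (\<forall>(d::nat) (T::nat) (\<rho>::nat \<Rightarrow> nat \<Rightarrow> nat \<Rightarrow> complex).
        d \<ge> 1 \<longrightarrow> T \<ge> 1 \<longrightarrow> (\<forall>t<T. density d (\<rho> t)) \<longrightarrow>
        cmod (expect (basis d T) (prod_state T \<rho>) (A_op d T) - mu d T \<rho>) \<le> 1 / real T \<and>
        Re (variance (basis d T) (prod_state T \<rho>) (A_op d T))
          \<le> K * (Re (mu d T \<rho>) / real T + 1 / (real T)^2))"
proof (intro exI[of _ 28] conjI allI impI)
  fix d T :: nat and \<rho> :: "nat \<Rightarrow> nat \<Rightarrow> nat \<Rightarrow> complex"
  assume "d \<ge> 1" "T \<ge> 1" "\<forall>t<T. density d (\<rho> t)"
  then show "cmod (expect (basis d T) (prod_state T \<rho>) (A_op d T) - mu d T \<rho>) \<le> 1 / real T"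
    and "Re (variance (basis d T) (prod_state T \<rho>) (A_op d T))
      \<le> 28 * (Re (mu d T \<rho>) / real T + 1 / (real T)^2)"
    by (rule expect_A_op_sub_mu_le, rule variance_A_op_le)
qed simp

end
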